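(* Let $F_n:\mathcal{Y}\to[-\infty,0]$, $n\in\mathbb{N}$, satisfy the separated subadditivity condition (S). Then for every $k\in\mathbb{N}$, every integer $\ell>\ell_0$ and every $y\in\mathcal{Y}$, $$\limsup_{n\to\infty}\frac{F_{(n-1)\ell+nk}(y)}{n}\ge\alpha(\ell)(k+\ell)\limsup_{n\to\infty}\frac{F_n(y)}{n}.$$
   Context: Discrete time: $\Psi:\mathcal{Y}\to\mathcal{Y}$ measurable. Condition (S): there exist $\ell_0\ge0$ and a non-increasing $\alpha:[\ell_0,\infty)\to[1,\infty)$ with $\lim_{\ell\to\infty}\alpha(\ell)=1$ such that for all $n\ge1$, all $t_1,\dots,t_n\in\mathbb{N}$, all integers $\ell>\ell_0$ and all $y$, $$F_{(n-1)\ell+\sum_{k=1}^nt_k}(y)\le\frac{1}{\alpha(\ell)}\sum_{k=1}^nF_{t_k}\big(\Psi^{(k-1)\ell+\sum_{j=1}^{k-1}t_j}y\big).$$ *)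

theory Defs
  imports "HOL-Analysis.Analysis"
begin

definition cond_S ::
  "'y measure \<Rightarrow> ('y \<Rightarrow> 'y) \<Rightarrow> (nat \<Rightarrow> 'y \<Rightarrow> ereal) \<Rightarrow> real \<Rightarrow> (real \<Rightarrow> real) \<Rightarrow> bool" where
  "cond_S M Psi F l0 alpha \<longleftrightarrow>
     l0 \<ge> 0 \<and>
     (\<forall>x\<in>{l0..}. \<forall>x'\<in>{l0..}. x \<le> x' \<longrightarrow> alpha x' \<le> alpha x) \<and>
     (\<forall>x\<in>{l0..}. alpha x \<ge> 1) \<and>
     (alpha \<longlongrightarrow> 1) at_top \<and>
     (\<forall>n::nat. \<forall>t::nat \<Rightarrow> nat. \<forall>l::nat. \<forall>y\<in>space M.
        n \<ge> 1 \<longrightarrow> real l > l0 \<longrightarrow>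
        F ((n - 1) * l + (\<Sum>k=1..n. t k)) y
          \<le> ereal (1 / alpha (real l)) *
             (\<Sum>k=1..n. F (t k) ((Psi ^^ ((k - 1) * l + (\<Sum>j=1..k-1. t j))) y)))"

end

theory Submission
  imports Defs "HOL-Real_Asymp.Real_Asymp"
begin

text \<open>Apply (S) with two blocks of lengths \<open>(n-1)l + nk\<close> and \<open>N - n(k+l)\<close>, separated by
  a gap of length \<open>l\<close>; the second block contributes a nonpositive term, so
  \<open>\<alpha>(l) F N y \<le> F ((n-1)l + nk) y\<close> whenever \<open>n(k+l) \<le> N\<close>. Choosing \<open>n = N div (k+l)\<close>,
  for which \<open>N / n \<rightarrow> k+l\<close>, and dividing by \<open>n\<close> bounds \<open>\<alpha>(l)(k+l) F N y / N\<close> asymptotically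
  by \<open>F ((n-1)l + nk) y / n\<close> along \<open>n = N div (k+l) \<rightarrow> \<infinity>\<close>, whose limsup is at most the
  limsup over all \<open>n\<close>.\<close>

lemma limsup_filterlim_reindex_le:
  fixes a :: "nat \<Rightarrow> 'a::complete_linorder"
  assumes "filterlim g sequentially sequentially"
  shows "limsup (\<lambda>N. a (g N)) \<le> limsup a"
proof -
  have "limsup (\<lambda>N. a (g N)) \<le> Limsup (filtermap g sequentially) a"
    by (rule Limsup_filtermap_ge)
  also have "\<dots> \<le> limsup a"
    unfolding Limsup_def
  proof (rule INF_mono)
    fix P assume "P \<in> {P. eventually P sequentially}"
    then have "eventually P (filtermap g sequentially)"
      using assms unfolding filterlim_def by (auto simp: le_filter_def)
    then show "\<exists>Q\<in>{P. eventually P (filtermap g sequentially)}. (SUP x\<in>Collect Q. a x) \<le> (SUP x\<in>Collect P. a x)"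
      by blast
  qed
  finally show ?thesis .
qed

lemma funpow_in_space:
  assumes "Psi \<in> M \<rightarrow>\<^sub>M M" "y \<in> space M"
  shows "(Psi ^^ j) y \<in> space M"
  using assms by (induction j) (auto simp: measurable_space)

lemma cond_S_two_blocks:
  assumes "cond_S M Psi F l0 alpha" "real l > l0" "y \<in> space M"
  shows "F (s + l + t) y \<le> ereal (1 / alpha (real l)) * (F s y + F t ((Psi ^^ (l + s)) y))"
proof -
  have blocks: "\<And>n b. n \<ge> 1 \<Longrightarrow> F ((n - 1) * l + (\<Sum>i=1..n. b i)) y
          \<le> ereal (1 / alpha (real l)) * (\<Sum>i=1..n. F (b i) ((Psi ^^ ((i - 1) * l + (\<Sum>j=1..i-1. b j))) y))"
    using assms unfolding cond_S_def by blast
  from blocks[of 2 "\<lambda>i. if i = 1 then s else t"] show ?thesis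
    by (simp add: numeral_2_eq_2 add.commute add.left_commute)
qed

lemma cond_S_prefix_bound:
  assumes "cond_S M Psi F l0 alpha" "real l > l0" "y \<in> space M"
    and "Psi \<in> M \<rightarrow>\<^sub>M M" and nonpos: "\<And>n y. y \<in> space M \<Longrightarrow> F n y \<le> 0"
  shows "F (s + l + t) y \<le> ereal (1 / alpha (real l)) * F s y"
proof -
  have "alpha (real l) \<ge> 1"
    using assms(1,2) unfolding cond_S_def by auto
  moreover have "F t ((Psi ^^ (l + s)) y) \<le> 0"
    using nonpos funpow_in_space[OF assms(4,3)] by blast
  then have "F s y + F t ((Psi ^^ (l + s)) y) \<le> F s y"
    using add_left_mono by fastforce
  ultimately have "ereal (1 / alpha (real l)) * (F s y + F t ((Psi ^^ (l + s)) y))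
                     \<le> ereal (1 / alpha (real l)) * F s y"
    by (intro ereal_mult_left_mono) auto
  with cond_S_two_blocks[OF assms(1-3)] show ?thesis
    by (rule order_trans)
qed

lemma ereal_rescale_le:
  fixes x z :: ereal and c p q :: real
  assumes "x \<le> ereal (1 / c) * z" "c > 0" "p > 0" "q > 0"
  shows "ereal (c * p / q) * (x / ereal p) \<le> z / ereal q"
proof (cases z)
  case (real r)
  show ?thesis
  proof (cases x)
    case (real w)
    with \<open>z = ereal r\<close> assms have "c * w \<le> r"
      by (simp add: field_simps)
    then have "c * w / q \<le> r / q"
      using assms by (simp add: divide_right_mono)
    with \<open>x = ereal w\<close> \<open>z = ereal r\<close> assms show ?thesis
      by simp
  qed (use assms \<open>z = ereal r\<close> in auto)
next
  case MInf
  with assms have "x = - \<infinity>" by simp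
  with MInf assms show ?thesis by simp
qed (use assms in simp)

lemma real_div_nat_div_tendsto:
  fixes m :: nat
  assumes "m > 0"
  shows "(\<lambda>N. real N / real (N div m)) \<longlonglongrightarrow> real m"
proof (rule tendsto_sandwich[of "\<lambda>_. real m" _ _ "\<lambda>N. real m * real N / (real N - real m)"])
  show "eventually (\<lambda>N. real m \<le> real N / real (N div m)) sequentially"
    using eventually_ge_at_top[of m]
  proof eventually_elim
    case (elim N)
    then have "N div m > 0" using assms by (simp add: div_greater_zero_iff)
    moreover have "real (N div m) * real m \<le> real N"
      by (metis div_times_less_eq_dividend of_nat_le_iff of_nat_mult)
    ultimately show ?case by (simp add: field_simps)
  qed
  show "eventually (\<lambda>N. real N / real (N div m) \<le> real m * real N / (real N - real m)) sequentially"
    using eventually_gt_at_top[of m]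
  proof eventually_elim
    case (elim N)
    then have pos: "N div m > 0" using assms by (simp add: div_greater_zero_iff)
    have "N < m * (N div m) + m"
      using mult_div_mod_eq[of m N] mod_less_divisor[OF assms, of N] by linarith
    then have "real N < real m * real (N div m) + real m"
      by (metis of_nat_add of_nat_less_iff of_nat_mult)
    then have "real N * real N \<le> real N * (real m * real (N div m) + real m)"
      by (intro mult_left_mono) auto
    with elim pos show ?case by (simp add: field_simps)
  qed
  show "(\<lambda>N. real m * real N / (real N - real m)) \<longlonglongrightarrow> real m"
    by real_asymp
qed simp

theorem lemmaD2:
  fixes M :: "'y measure" and Psi :: "'y \<Rightarrow> 'y" and F :: "nat \<Rightarrow> 'y \<Rightarrow> ereal"
    and l0 :: real and alpha :: "real \<Rightarrow> real"
  assumes Psi_meas: "Psi \<in> M \<rightarrow>\<^sub>M M"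
    and F_range: "\<And>n y. y \<in> space M \<Longrightarrow> F n y \<le> 0"
    and S: "cond_S M Psi F l0 alpha"
    and l: "real l > l0"
    and y: "y \<in> space M"
  shows "limsup (\<lambda>n. F ((n - 1) * l + n * k) y / ereal (real n))
           \<ge> ereal (alpha (real l) * (real k + real l)) * limsup (\<lambda>n. F n y / ereal (real n))"
proof -
  define m where "m = k + l"
  define al where "al = alpha (real l)"
  define a where "a = (\<lambda>n. F ((n - 1) * l + n * k) y / ereal (real n))"
  define b where "b = (\<lambda>N. F N y / ereal (real N))"
  have al: "al \<ge> 1" and "l \<ge> 1"
    using S l unfolding cond_S_def al_def by auto
  then have m: "m > 0" by (simp add: m_def)
  have dominated: "ereal (al * real N / real (N div m)) * b N \<le> a (N div m)" if "N \<ge> m" for N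
  proof -
    define n where "n = N div m"
    have n: "n > 0" using that m by (simp add: n_def div_greater_zero_iff)
    have "N = ((n - 1) * l + n * k) + l + (N - n * m)"
      using n div_times_less_eq_dividend[of N m]
      by (cases n) (simp_all add: n_def m_def algebra_simps)
    then have "F N y \<le> ereal (1 / al) * F ((n - 1) * l + n * k) y"
      using cond_S_prefix_bound[OF S l y Psi_meas F_range] unfolding al_def by metis
    then show ?thesis
      using ereal_rescale_le al n that m unfolding a_def b_def n_def by simp
  qed
  have "filterlim (\<lambda>N. N div m) sequentially sequentially"
    using m by (intro filterlim_at_top_div_const_nat)
  then have "limsup (\<lambda>N. a (N div m)) \<le> limsup a"
    by (rule limsup_filterlim_reindex_le)
  moreover have "eventually (\<lambda>N. ereal (al * real N / real (N div m)) * b N \<le> a (N div m)) sequentially"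
    using eventually_ge_at_top[of m] by eventually_elim (rule dominated)
  then have "limsup (\<lambda>N. ereal (al * real N / real (N div m)) * b N) \<le> limsup (\<lambda>N. a (N div m))"
    by (rule Limsup_mono)
  moreover have "(\<lambda>N. al * (real N / real (N div m))) \<longlonglongrightarrow> al * real m"
    using real_div_nat_div_tendsto[OF m] by (rule tendsto_mult_left)
  then have "(\<lambda>N. ereal (al * real N / real (N div m))) \<longlonglongrightarrow> ereal (al * real m)"
    by (intro tendsto_ereal) simp
  then have "limsup (\<lambda>N. ereal (al * real N / real (N div m)) * b N) = ereal (al * real m) * limsup b"
    using al m by (intro ereal_limsup_lim_mult) auto
  ultimately show ?thesis
    unfolding a_def b_def al_def m_def by simp
qed

end
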